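(* Let $f$ be an $n$-variable Boolean function. Then $\min({FAI}(f),{FAI}(1+f))\le 2\,{AI}(f)$.
   Context: An $n$-variable Boolean function is a map $\mathbb{F}_2^n\to\mathbb{F}_2$, with algebraic degree $\deg$ the degree of its algebraic normal form. ${LDA}(h)$ is the minimum algebraic degree of a nonzero $g$ with $h\cdot g=0$; ${AI}(f)=\min({LDA}(f),{LDA}(1+f))$. ${AN}^c(f)$ is the set of $g$ with $f\cdot g\neq0$, and ${FAI}(f)$ is the minimum of $\deg(g)+\deg(f\cdot g)$ over $g\in{AN}^c(f)$, $g\neq 1$. *)

theory Defs
  imports Main "HOL-Library.Extended_Nat"
begin

text \<open>An n-variable Boolean function F_2^n -> F_2 is modelled as a map
  f :: 'n set => bool, where 'n is a finite type with n = CARD('n) elements: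
  a vector x in F_2^n is identified with its support (a subset of the index type),
  and the value True stands for 1 in F_2.\<close>

type_synonym 'n bfun = "'n set \<Rightarrow> bool"

text \<open>Coefficient of the monomial prod_{i in S} x_i in the algebraic normal form
  (binary Moebius transform): a_S = sum over T subset of S of f(T), mod 2.\<close>
definition anf_coeff :: "'n::finite bfun \<Rightarrow> 'n set \<Rightarrow> bool" where
  "anf_coeff f S = odd (card {T. T \<subseteq> S \<and> f T})"

text \<open>Algebraic degree: largest size of a monomial occurring in the ANF
  (the zero function gets degree 0 by convention).\<close>
definition alg_deg :: "'n::finite bfun \<Rightarrow> nat" where
  "alg_deg f = Max (insert 0 (card ` {S. anf_coeff f S}))"

text \<open>Pointwise product (AND) and sum with the constant 1 (negation).\<close>
definition bmult :: "'n bfun \<Rightarrow> 'n bfun \<Rightarrow> 'n bfun" where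
  "bmult h g = (\<lambda>x. h x \<and> g x)"

definition bcompl :: "'n bfun \<Rightarrow> 'n bfun" where
  "bcompl f = (\<lambda>x. \<not> f x)"

text \<open>LDA(h): minimum algebraic degree of a nonzero g with h*g = 0
  (infinity if no such g exists).\<close>
definition LDA :: "'n::finite bfun \<Rightarrow> enat" where
  "LDA h = (INF g\<in>{g. g \<noteq> (\<lambda>_. False) \<and> bmult h g = (\<lambda>_. False)}. enat (alg_deg g))"

definition AI :: "'n::finite bfun \<Rightarrow> enat" where
  "AI f = min (LDA f) (LDA (bcompl f))"

definition ANc :: "'n::finite bfun \<Rightarrow> 'n bfun set" where
  "ANc f = {g. bmult f g \<noteq> (\<lambda>_. False)}"

definition FAI :: "'n::finite bfun \<Rightarrow> enat" where
  "FAI f = (INF g\<in>{g. g \<in> ANc f \<and> g \<noteq> (\<lambda>_. True)}.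
              enat (alg_deg g + alg_deg (bmult f g)))"

end

theory Submission
  imports Defs
begin

text \<open>A nonzero annihilator g of 1 + f vanishes outside the support of f, so f g = g and g
  is admissible in the definition of FAI f at cost 2 deg g. Choosing g of degree LDA(1 + f)
  gives FAI f \<le> 2 LDA(1 + f), and symmetrically FAI(1 + f) \<le> 2 LDA f.\<close>

lemma bcompl_bcompl [simp]: "bcompl (bcompl f) = f"
  by (simp add: bcompl_def)

lemma bcompl_eq_True_iff: "bcompl f = (\<lambda>_. True) \<longleftrightarrow> f = (\<lambda>_. False)"
  by (auto simp: bcompl_def fun_eq_iff)

lemma LDA_attained:
  fixes h :: "'n::finite bfun"
  assumes "LDA h \<noteq> \<infinity>"
  obtains g where "g \<noteq> (\<lambda>_. False)" "bmult h g = (\<lambda>_. False)" "LDA h = enat (alg_deg g)"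
proof -
  let ?A = "{g. g \<noteq> (\<lambda>_. False) \<and> bmult h g = (\<lambda>_. False)}"
  have "?A \<noteq> {}"
    using assms unfolding LDA_def by (metis INF_empty top_enat_def)
  then have "LDA h \<in> (\<lambda>g. enat (alg_deg g)) ` ?A"
    unfolding LDA_def by (blast intro: wellorder_InfI)
  then show thesis
    using that by blast
qed

lemma bmult_eq_self_if_annihilates_bcompl:
  assumes "bmult (bcompl f) g = (\<lambda>_. False)"
  shows "bmult f g = g"
  using assms by (auto simp: bmult_def bcompl_def fun_eq_iff)

lemma FAI_le_twice_deg_annihilator_bcompl:
  fixes f :: "'n::finite bfun"
  assumes "f \<noteq> (\<lambda>_. True)" and "g \<noteq> (\<lambda>_. False)"
    and "bmult (bcompl f) g = (\<lambda>_. False)"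
  shows "FAI f \<le> 2 * enat (alg_deg g)"
proof -
  have fg: "bmult f g = g"
    using assms(3) by (rule bmult_eq_self_if_annihilates_bcompl)
  have "g \<noteq> (\<lambda>_. True)"
    using assms(1,3) by (auto simp: bmult_def bcompl_def fun_eq_iff)
  then have "g \<in> {g. g \<in> ANc f \<and> g \<noteq> (\<lambda>_. True)}"
    using fg assms(2) by (simp add: ANc_def)
  then have "FAI f \<le> enat (alg_deg g + alg_deg (bmult f g))"
    unfolding FAI_def by (rule INF_lower)
  also have "\<dots> = 2 * enat (alg_deg g)"
    by (simp add: fg mult_2)
  finally show ?thesis .
qed

lemma FAI_le_twice_LDA_bcompl:
  fixes f :: "'n::finite bfun"
  assumes "f \<noteq> (\<lambda>_. True)"
  shows "FAI f \<le> 2 * LDA (bcompl f)"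
proof (cases "LDA (bcompl f) = \<infinity>")
  case True
  then show ?thesis
    by (simp add: imult_infinity_right)
next
  case False
  then obtain g where "g \<noteq> (\<lambda>_. False)" "bmult (bcompl f) g = (\<lambda>_. False)"
    and "LDA (bcompl f) = enat (alg_deg g)"
    by (rule LDA_attained)
  then show ?thesis
    using FAI_le_twice_deg_annihilator_bcompl[OF assms] by simp
qed

theorem corollary1:
  fixes f :: "'n::finite set \<Rightarrow> bool"
  assumes "f \<noteq> (\<lambda>_. False)" and "f \<noteq> (\<lambda>_. True)"
  shows "min (FAI f) (FAI (bcompl f)) \<le> 2 * AI f"
proof -
  have "FAI f \<le> 2 * LDA (bcompl f)"
    using assms(2) by (rule FAI_le_twice_LDA_bcompl)
  moreover have "FAI (bcompl f) \<le> 2 * LDA f"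
    using FAI_le_twice_LDA_bcompl[of "bcompl f"] assms(1) by (simp add: bcompl_eq_True_iff)
  ultimately show ?thesis
    unfolding AI_def by (auto simp: min_def)
qed

end
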